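(* Consider equation (E) and assume each $\tau_i$ is non-decreasing. Let $p>0$ be a constant with $p_i(t)\ge p$ for all $t\ge t_0$ and $i=1,\dots,m$. If $$p^{m}\limsup_{t\to+\infty}\prod_{i=1}^{m}\big(t-\tau_i(t)\big)>\frac{1}{m^{m}},$$ then all solutions of (E) oscillate.
   Context: Equation (E) is $x'(t)+\sum_{i=1}^{m}p_i(t)\,x(\tau_i(t))=0$, $t\ge t_0$, where $m\ge1$ is an integer and, for each $i$, $p_i,\tau_i:[t_0,\infty)\to[0,\infty)$ are continuous, $\tau_i(t)\le t$ for $t\ge t_0$, and $\lim_{t\to\infty}\tau_i(t)=\infty$. Let $\tau(t)=\min_i\tau_i(t)$ and $\tau_{(-1)}(t)=\sup\{s:\tau(s)\le t\}$. A solution of (E) is a function $x\in C([T_0,\infty);\mathbb{R})$ for some $T_0\ge t_0$ which is continuously differentiable on $[\tau_{(-1)}(T_0),\infty)$ and satisfies (E) for $t\ge\tau_{(-1)}(T_0)$. A solution is oscillatory if it has arbitrarily large zeros; "all solutions oscillate" means every solution is oscillatory. *)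

theory Defs
  imports "HOL-Analysis.Analysis"
begin

text \<open>Equation (E): x'(t) + sum_{i=1}^m p_i(t) x(tau_i(t)) = 0, t >= t0.
  Indices i range over {1..m}.\<close>

definition tau_min :: "nat \<Rightarrow> (nat \<Rightarrow> real \<Rightarrow> real) \<Rightarrow> real \<Rightarrow> real" where
  "tau_min m \<tau> t = Min ((\<lambda>i. \<tau> i t) ` {1..m})"

definition tau_inv :: "real \<Rightarrow> nat \<Rightarrow> (nat \<Rightarrow> real \<Rightarrow> real) \<Rightarrow> real \<Rightarrow> real" where
  "tau_inv t0 m \<tau> t = Sup {s. t0 \<le> s \<and> tau_min m \<tau> s \<le> t}"

definition is_solution ::
  "real \<Rightarrow> nat \<Rightarrow> (nat \<Rightarrow> real \<Rightarrow> real) \<Rightarrow> (nat \<Rightarrow> real \<Rightarrow> real) \<Rightarrow> (real \<Rightarrow> real) \<Rightarrow> real \<Rightarrow> bool" where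
  "is_solution t0 m p \<tau> x T0 \<longleftrightarrow>
     t0 \<le> T0 \<and> continuous_on {T0..} x \<and>
     (\<exists>x'. continuous_on {tau_inv t0 m \<tau> T0..} x' \<and>
        (\<forall>t\<ge>tau_inv t0 m \<tau> T0. (x has_real_derivative x' t) (at t within {tau_inv t0 m \<tau> T0..})) \<and>
        (\<forall>t\<ge>tau_inv t0 m \<tau> T0. x' t + (\<Sum>i=1..m. p i t * x (\<tau> i t)) = 0))"

definition oscillatory :: "(real \<Rightarrow> real) \<Rightarrow> bool" where
  "oscillatory x \<longleftrightarrow> (\<forall>T. \<exists>t\<ge>T. x t = 0)"

end

theory Submission
  imports Defs
begin

(* Suppose x is a nonoscillatory solution.  Having no large zeros
   and being continuous, x has eventually constant sign, and since -x solves
   (E) as well we may assume x > 0 eventually.  Then x is eventually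
   nonincreasing, so on [tau_i(t), t] the derivative satisfies
   x'(s) <= -pc * S(t) with S(t) = sum_j x(tau_j(t)); integrating gives
   pc * S(t) * (t - tau_i(t)) <= x(tau_i(t)) - x(t), and summing over i yields
   pc * sum_i (t - tau_i(t)) < 1 for all large t.  On the other hand, by the
   AM-GM inequality, pc * sum_i (t - tau_i(t)) < 1 for all large t would force
   pc^m * limsup prod_i (t - tau_i(t)) <= 1/m^m, contradicting the hypothesis. *)

lemma prod_le_mean_power:
  fixes a :: "'b \<Rightarrow> real"
  assumes fin: "finite S" and ne: "S \<noteq> {}" and nn: "\<And>i. i \<in> S \<Longrightarrow> 0 \<le> a i"
  shows "(\<Prod>i\<in>S. a i) \<le> ((\<Sum>i\<in>S. a i) / card S) ^ card S"
proof -
  let ?n = "card S" and ?P = "\<Prod>i\<in>S. a i"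
  have n: "?n > 0" using fin ne by (simp add: card_gt_0_iff)
  have P: "0 \<le> ?P" using nn by (simp add: prod_nonneg)
  have "?P powr (1 / ?n) \<le> (\<Sum>i\<in>S. a i / ?n)"
    using arith_geom_mean[OF fin ne, of a] nn by blast
  also have "\<dots> = (\<Sum>i\<in>S. a i) / ?n" by (simp add: sum_divide_distrib)
  finally have mean: "?P powr (1 / ?n) \<le> (\<Sum>i\<in>S. a i) / ?n" .
  have "?P = (?P powr (1 / ?n)) ^ ?n"
    using n P by (cases "?P = 0") (simp_all add: powr_realpow [symmetric] powr_powr)
  also have "\<dots> \<le> ((\<Sum>i\<in>S. a i) / ?n) ^ ?n" by (rule power_mono[OF mean]) simp
  finally show ?thesis .
qed

lemma delay_product_bound:
  fixes d :: "nat \<Rightarrow> real"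
  assumes m_pos: "1 \<le> m" and pc_pos: "0 < pc"
    and nn: "\<And>i. i \<in> {1..m} \<Longrightarrow> 0 \<le> d i"
    and small: "pc * (\<Sum>i=1..m. d i) \<le> 1"
  shows "(\<Prod>i=1..m. d i) \<le> (1 / (pc * m)) ^ m"
proof -
  have "(\<Prod>i=1..m. d i) \<le> ((\<Sum>i=1..m. d i) / m) ^ m"
    using prod_le_mean_power[of "{1..m}" d] nn m_pos by simp
  also have "\<dots> \<le> (1 / (pc * m)) ^ m"
  proof (rule power_mono)
    show "0 \<le> (\<Sum>i=1..m. d i) / real m" using nn by (intro divide_nonneg_nonneg sum_nonneg) auto
    show "(\<Sum>i=1..m. d i) / real m \<le> 1 / (pc * real m)"
      using small pc_pos m_pos by (simp add: field_simps)
  qed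
  finally show ?thesis .
qed

lemma delay_sum_frequently_large:
  fixes \<tau> :: "nat \<Rightarrow> real \<Rightarrow> real"
  assumes m_pos: "1 \<le> m" and pc_pos: "0 < pc"
    and tau_le: "\<And>i t. i \<in> {1..m} \<Longrightarrow> t0 \<le> t \<Longrightarrow> \<tau> i t \<le> t"
    and cond: "ereal (pc ^ m) * Limsup at_top (\<lambda>t. ereal (\<Prod>i=1..m. t - \<tau> i t))
                 > ereal (1 / real m ^ m)"
  shows "\<exists>t\<ge>T. 1 \<le> pc * (\<Sum>i=1..m. t - \<tau> i t)"
proof (rule ccontr)
  assume "\<not> ?thesis"
  then have small: "\<And>t. T \<le> t \<Longrightarrow> pc * (\<Sum>i=1..m. t - \<tau> i t) \<le> 1" by force
  define c where "c = (1 / (pc * m)) ^ m"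
  have "eventually (\<lambda>t. ereal (\<Prod>i=1..m. t - \<tau> i t) \<le> ereal c) at_top"
    unfolding eventually_at_top_linorder c_def
    using delay_product_bound[OF m_pos pc_pos] tau_le small
    by (intro exI[of _ "max T t0"]) force
  then have "Limsup at_top (\<lambda>t. ereal (\<Prod>i=1..m. t - \<tau> i t)) \<le> ereal c"
    by (rule Limsup_bounded)
  then have "ereal (pc ^ m) * Limsup at_top (\<lambda>t. ereal (\<Prod>i=1..m. t - \<tau> i t))
               \<le> ereal (pc ^ m) * ereal c"
    by (rule ereal_mult_left_mono) (use pc_pos in simp)
  also have "\<dots> = ereal (1 / real m ^ m)"
    unfolding c_def using pc_pos m_pos by (simp add: power_divide power_mult_distrib)
  finally show False using cond by simp
qed

lemma zero_free_constant_sign: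
  fixes x :: "real \<Rightarrow> real"
  assumes cont: "continuous_on {B..} x" and nz: "\<And>t. B \<le> t \<Longrightarrow> x t \<noteq> 0"
  shows "(\<forall>t\<ge>B. 0 < x t) \<or> (\<forall>t\<ge>B. x t < 0)"
proof -
  have cB: "continuous_on {B..t} x" for t by (rule continuous_on_subset[OF cont]) auto
  have same_sign: "0 < x t \<longleftrightarrow> 0 < x B" if "B \<le> t" for t
  proof
    assume "0 < x t" show "0 < x B"
    proof (rule ccontr)
      assume "\<not> 0 < x B"
      then obtain z where "B \<le> z" "x z = 0"
        using IVT'[of x B 0 t] cB[of t] \<open>0 < x t\<close> \<open>B \<le> t\<close> by force
      with nz show False by blast
    qed
  next
    assume "0 < x B" show "0 < x t"
    proof (rule ccontr)
      assume "\<not> 0 < x t"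
      then obtain z where "B \<le> z" "x z = 0"
        using IVT2'[of x t 0 B] cB[of t] \<open>0 < x B\<close> \<open>B \<le> t\<close> by force
      with nz show False by blast
    qed
  qed
  show ?thesis
    using same_sign nz by (cases "0 < x B") (metis linorder_neq_iff)+
qed

lemma drop_from_derivative_bound:
  fixes f f' :: "real \<Rightarrow> real"
  assumes ut: "u \<le> t"
    and der: "\<And>s. u \<le> s \<Longrightarrow> s \<le> t \<Longrightarrow> (f has_real_derivative f' s) (at s)"
    and bound: "\<And>s. u \<le> s \<Longrightarrow> s \<le> t \<Longrightarrow> f' s \<le> - c"
  shows "c * (t - u) \<le> f u - f t"
proof -
  have "f t + c * t \<le> f u + c * u"
  proof (rule DERIV_nonpos_imp_nonincreasing[OF ut])
    fix s assume s: "u \<le> s" "s \<le> t"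
    have "((\<lambda>s. f s + c * s) has_real_derivative f' s + c) (at s)"
      using der[OF s] by (auto intro!: derivative_eq_intros)
    moreover have "f' s + c \<le> 0" using bound[OF s] by simp
    ultimately show "\<exists>y. ((\<lambda>s. f s + c * s) has_real_derivative y) (at s) \<and> y \<le> 0" by blast
  qed
  then show ?thesis by (simp add: algebra_simps)
qed

lemma is_solution_uminus:
  assumes "is_solution t0 m p \<tau> x T0"
  shows "is_solution t0 m p \<tau> (\<lambda>t. - x t) T0"
proof -
  let ?A = "tau_inv t0 m \<tau> T0"
  obtain x' where "t0 \<le> T0" and cont: "continuous_on {T0..} x" and cont': "continuous_on {?A..} x'"
    and der: "\<And>t. ?A \<le> t \<Longrightarrow> (x has_real_derivative x' t) (at t within {?A..})"
    and eq: "\<And>t. ?A \<le> t \<Longrightarrow> x' t + (\<Sum>i=1..m. p i t * x (\<tau> i t)) = 0"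
    using assms unfolding is_solution_def by blast
  have "- x' t + (\<Sum>i=1..m. p i t * - x (\<tau> i t)) = 0" if "?A \<le> t" for t
    using eq[OF that] by (simp add: sum_negf)
  with \<open>t0 \<le> T0\<close> cont cont' der show ?thesis
    unfolding is_solution_def
    by (intro conjI exI[of _ "\<lambda>t. - x' t"] continuous_intros allI impI DERIV_minus) auto
qed

lemma delays_eventually_ge:
  fixes m :: nat and \<tau> :: "nat \<Rightarrow> real \<Rightarrow> real"
  assumes "\<And>i. i \<in> {1..m} \<Longrightarrow> filterlim (\<tau> i) at_top at_top"
  obtains T where "L \<le> T" and "\<And>s i. T \<le> s \<Longrightarrow> i \<in> {1..m} \<Longrightarrow> L \<le> \<tau> i s"
proof -
  have "eventually (\<lambda>s. \<forall>i\<in>{1..m}. L \<le> \<tau> i s) at_top"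
    by (rule eventually_ball_finite) (use assms in \<open>auto simp: filterlim_at_top\<close>)
  then obtain T where "\<forall>s\<ge>T. \<forall>i\<in>{1..m}. L \<le> \<tau> i s"
    unfolding eventually_at_top_linorder by blast
  then show ?thesis using that[of "max T L"] by simp
qed

lemma positive_solution_small_delays:
  fixes m :: nat and p \<tau> :: "nat \<Rightarrow> real \<Rightarrow> real" and x :: "real \<Rightarrow> real"
    and t0 pc B T0 :: real
  assumes m_pos: "1 \<le> m"
    and tau_le: "\<And>i t. i \<in> {1..m} \<Longrightarrow> t0 \<le> t \<Longrightarrow> \<tau> i t \<le> t"
    and tau_lim: "\<And>i. i \<in> {1..m} \<Longrightarrow> filterlim (\<tau> i) at_top at_top"
    and tau_mono: "\<And>i. i \<in> {1..m} \<Longrightarrow> mono_on {t0..} (\<tau> i)"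
    and pc_pos: "0 < pc"
    and p_ge: "\<And>i t. i \<in> {1..m} \<Longrightarrow> t0 \<le> t \<Longrightarrow> pc \<le> p i t"
    and sol: "is_solution t0 m p \<tau> x T0"
    and pos: "\<And>t. B \<le> t \<Longrightarrow> 0 < x t"
  shows "\<exists>T. \<forall>t\<ge>T. pc * (\<Sum>i=1..m. t - \<tau> i t) < 1"
proof -
  define A where "A = tau_inv t0 m \<tau> T0"
  obtain x' where der: "\<And>t. A \<le> t \<Longrightarrow> (x has_real_derivative x' t) (at t within {A..})"
    and eq: "\<And>t. A \<le> t \<Longrightarrow> x' t + (\<Sum>i=1..m. p i t * x (\<tau> i t)) = 0"
    using sol unfolding is_solution_def A_def by blast
  define B' where "B' = max B (max A t0) + 1"
  have B': "A < B'" "B < B'" "t0 < B'" unfolding B'_def by auto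
  obtain C where CB: "B' \<le> C" and C: "\<And>s i. C \<le> s \<Longrightarrow> i \<in> {1..m} \<Longrightarrow> B' \<le> \<tau> i s"
    using delays_eventually_ge[of m \<tau> B'] tau_lim by blast
  obtain E where EC: "C \<le> E" and E: "\<And>s i. E \<le> s \<Longrightarrow> i \<in> {1..m} \<Longrightarrow> C \<le> \<tau> i s"
    using delays_eventually_ge[of m \<tau> C] tau_lim by blast
  obtain D where DE: "E \<le> D" and D: "\<And>s i. D \<le> s \<Longrightarrow> i \<in> {1..m} \<Longrightarrow> E \<le> \<tau> i s"
    using delays_eventually_ge[of m \<tau> E] tau_lim by blast
  have derat: "(x has_real_derivative x' s) (at s)" if "C \<le> s" for s
  proof -
    have "A < s" using that CB B' by linarith
    then have "at s within {A..} = at s"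
      by (intro at_within_interior) (simp add: interior_Ici[of "A - 1"])
    with der[of s] \<open>A < s\<close> show ?thesis by simp
  qed
  have xpos: "0 < x (\<tau> i s)" if "C \<le> s" "i \<in> {1..m}" for s i
    using C[OF that] B'(2) pos by simp
  text \<open>Since x is positive at the delayed arguments, x' <= 0 and x is
    nonincreasing beyond C.\<close>
  have xmono: "x v \<le> x u" if "C \<le> u" "u \<le> v" for u v
  proof (rule DERIV_nonpos_imp_nonincreasing[OF \<open>u \<le> v\<close>])
    fix s assume "u \<le> s" "s \<le> v"
    with that have s: "C \<le> s" "t0 \<le> s" "A \<le> s" using CB B' by linarith+
    have "0 \<le> p i s * x (\<tau> i s)" if "i \<in> {1..m}" for i
      using p_ge[OF that s(2)] xpos[OF s(1) that] pc_pos by simp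
    then have "0 \<le> (\<Sum>i=1..m. p i s * x (\<tau> i s))" by (rule sum_nonneg)
    then have "x' s \<le> 0" using eq[OF s(3)] by simp
    with derat[OF s(1)] show "\<exists>y. (x has_real_derivative y) (at s) \<and> y \<le> 0" by blast
  qed
  have "pc * (\<Sum>i=1..m. t - \<tau> i t) < 1" if t: "D \<le> t" for t
  proof -
    define S where "S = (\<Sum>j=1..m. x (\<tau> j t))"
    have tC: "C \<le> t" using t DE EC by simp
    have Spos: "0 < S" unfolding S_def by (rule sum_pos) (use m_pos xpos[OF tC] in auto)
    text \<open>On [tau_i t, t] the delayed values only grow, so x' <= -pc * S.\<close>
    have slope: "x' s \<le> - (pc * S)" if s: "E \<le> s" "s \<le> t" for s
    proof -
      have st0: "t0 \<le> s" "A \<le> s" using s EC CB B' by linarith+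
      have "pc * S = (\<Sum>j=1..m. pc * x (\<tau> j t))" unfolding S_def by (simp add: sum_distrib_left)
      also have "\<dots> \<le> (\<Sum>j=1..m. p j s * x (\<tau> j s))"
      proof (rule sum_mono)
        fix j assume j: "j \<in> {1..m}"
        have "\<tau> j s \<le> \<tau> j t" by (rule mono_onD[OF tau_mono[OF j]]) (use st0 s in auto)
        then have "x (\<tau> j t) \<le> x (\<tau> j s)" using xmono E[OF s(1) j] by blast
        then show "pc * x (\<tau> j t) \<le> p j s * x (\<tau> j s)"
          using p_ge[OF j st0(1)] xpos[OF tC j] pc_pos by (intro mult_mono) auto
      qed
      finally show ?thesis using eq[OF st0(2)] by simp
    qed
    have drop: "pc * S * (t - \<tau> i t) \<le> x (\<tau> i t) - x t" if i: "i \<in> {1..m}" for i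
    proof (rule drop_from_derivative_bound[where f = x and f' = x'])
      have "t0 \<le> t" using t DE EC CB B' by linarith
      then show "\<tau> i t \<le> t" using tau_le[OF i] by simp
      fix s assume "\<tau> i t \<le> s" "s \<le> t"
      moreover have "E \<le> \<tau> i t" using D[OF t i] .
      ultimately show "(x has_real_derivative x' s) (at s)" "x' s \<le> - (pc * S)"
        using derat slope EC by simp_all
    qed
    have "pc * S * (\<Sum>i=1..m. t - \<tau> i t) = (\<Sum>i=1..m. pc * S * (t - \<tau> i t))"
      by (simp add: sum_distrib_left)
    also have "\<dots> \<le> (\<Sum>i=1..m. x (\<tau> i t) - x t)" by (rule sum_mono) (rule drop)
    also have "\<dots> = S - real m * x t" unfolding S_def by (simp add: sum_subtractf)
    also have "\<dots> < S" using pos[of t] t DE EC CB B' m_pos by simp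
    finally have "pc * (\<Sum>i=1..m. t - \<tau> i t) * S < 1 * S" by (simp add: ac_simps)
    then show ?thesis using Spos by (simp add: mult_less_cancel_right)
  qed
  then show ?thesis by blast
qed

theorem corollary3p5:
  fixes t0 :: real and m :: nat and p :: "nat \<Rightarrow> real \<Rightarrow> real"
    and \<tau> :: "nat \<Rightarrow> real \<Rightarrow> real" and pc :: real
  assumes m_pos: "1 \<le> m"
    and p_cont: "\<And>i. i \<in> {1..m} \<Longrightarrow> continuous_on {t0..} (p i)"
    and tau_cont: "\<And>i. i \<in> {1..m} \<Longrightarrow> continuous_on {t0..} (\<tau> i)"
    and p_nonneg: "\<And>i t. i \<in> {1..m} \<Longrightarrow> t0 \<le> t \<Longrightarrow> 0 \<le> p i t"
    and tau_nonneg: "\<And>i t. i \<in> {1..m} \<Longrightarrow> t0 \<le> t \<Longrightarrow> 0 \<le> \<tau> i t"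
    and tau_le: "\<And>i t. i \<in> {1..m} \<Longrightarrow> t0 \<le> t \<Longrightarrow> \<tau> i t \<le> t"
    and tau_lim: "\<And>i. i \<in> {1..m} \<Longrightarrow> filterlim (\<tau> i) at_top at_top"
    and tau_mono: "\<And>i. i \<in> {1..m} \<Longrightarrow> mono_on {t0..} (\<tau> i)"
    and pc_pos: "0 < pc"
    and p_ge: "\<And>i t. i \<in> {1..m} \<Longrightarrow> t0 \<le> t \<Longrightarrow> pc \<le> p i t"
    and cond: "ereal (pc ^ m) * Limsup at_top (\<lambda>t. ereal (\<Prod>i=1..m. t - \<tau> i t))
                 > ereal (1 / real m ^ m)"
  shows "\<forall>x T0. is_solution t0 m p \<tau> x T0 \<longrightarrow> oscillatory x"
proof (intro allI impI)
  fix x T0 assume sol: "is_solution t0 m p \<tau> x T0"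
  have positive_forces_small_delays: "\<exists>T'. \<forall>t\<ge>T'. pc * (\<Sum>i=1..m. t - \<tau> i t) < 1"
    if "is_solution t0 m p \<tau> y T1" "\<And>t. B \<le> t \<Longrightarrow> 0 < y t" for y T1 B
    by (rule positive_solution_small_delays[of m t0 \<tau> pc p y T1 B])
       (use m_pos tau_le tau_lim tau_mono pc_pos p_ge that in auto)
  show "oscillatory x"
  proof (rule ccontr)
    assume "\<not> oscillatory x"
    then obtain T where T: "\<And>t. T \<le> t \<Longrightarrow> x t \<noteq> 0" unfolding oscillatory_def by force
    define B where "B = max T T0"
    have "continuous_on {B..} x"
      using sol unfolding is_solution_def B_def by (auto elim: continuous_on_subset)
    then have "(\<forall>t\<ge>B. 0 < x t) \<or> (\<forall>t\<ge>B. 0 < - x t)"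
      using zero_free_constant_sign[of B x] T unfolding B_def by force
    then obtain T' where small: "\<And>t. T' \<le> t \<Longrightarrow> pc * (\<Sum>i=1..m. t - \<tau> i t) < 1"
      using positive_forces_small_delays[OF sol] positive_forces_small_delays[OF is_solution_uminus[OF sol]]
      by blast
    obtain t where "T' \<le> t" "1 \<le> pc * (\<Sum>i=1..m. t - \<tau> i t)"
      using delay_sum_frequently_large[OF m_pos pc_pos tau_le cond] by blast
    with small show False by fastforce
  qed
qed

end
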